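(* Let $\mathcal{L}_1=\langle c_1,G_1\rangle$ and $\mathcal{L}_2=\langle c_2,G_2\rangle$ be logical zonotopes in $\mathbb{B}^n$. Let $\tilde c_1=c_1\oplus\mathbf{1}$, $\tilde c_2=c_2\oplus\mathbf{1}$, and $$\tilde G=[\tilde c_1g_{2,1},\dots,\tilde c_1g_{2,\gamma_2},\tilde c_2g_{1,1},\dots,\tilde c_2g_{1,\gamma_1},g_{1,1}g_{2,1},\dots,g_{1,\gamma_1}g_{2,\gamma_2}]$$ (last block over all pairs $(i,j)$). Then the Minkowski OR satisfies $\{z_1\vee z_2: z_1\in\mathcal{L}_1,z_2\in\mathcal{L}_2\}\subseteq\langle \tilde c_1\tilde c_2\oplus\mathbf{1},\tilde G\rangle$, and the Minkowski NOR satisfies $\{\neg(z_1\vee z_2): z_1\in\mathcal{L}_1,z_2\in\mathcal{L}_2\}\subseteq\langle \tilde c_1\tilde c_2,\tilde G\rangle$.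
   Context: $\mathbb{B}=\{0,1\}$; $\mathbf{1}$ is the all-ones vector. For binary vectors, $\oplus$ denotes componentwise XOR, $\neg$ componentwise negation, $\vee$ componentwise OR, and juxtaposition $ab$ componentwise AND; for $g\in\mathbb{B}^n$, $\beta\in\mathbb{B}$, $g\beta$ is $g$ if $\beta=1$ and $0$ otherwise. A logical zonotope is $\langle c,G\rangle=\{x\in\mathbb{B}^n: x=c\oplus g_1\beta_1\oplus\cdots\oplus g_\gamma\beta_\gamma,\ \beta_i\in\{0,1\}\}$ for $c\in\mathbb{B}^n$, $G=[g_1,\dots,g_\gamma]\in\mathbb{B}^{n\times\gamma}$; $G_1=[g_{1,1},\dots,g_{1,\gamma_1}]$, $G_2=[g_{2,1},\dots,g_{2,\gamma_2}]$. *)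

theory Defs
  imports "HOL-Analysis.Analysis"
begin

text \<open>Binary vectors in B^n are modelled as bool ^ 'n (index type 'n, n = CARD('n)).
  Componentwise XOR, AND, OR, negation; all-ones vector.\<close>

definition bxor :: "bool ^ 'n \<Rightarrow> bool ^ 'n \<Rightarrow> bool ^ 'n" where
  "bxor a b = (\<chi> i. a $ i \<noteq> b $ i)"

definition band :: "bool ^ 'n \<Rightarrow> bool ^ 'n \<Rightarrow> bool ^ 'n" where
  "band a b = (\<chi> i. a $ i \<and> b $ i)"

definition bor :: "bool ^ 'n \<Rightarrow> bool ^ 'n \<Rightarrow> bool ^ 'n" where
  "bor a b = (\<chi> i. a $ i \<or> b $ i)"

definition bnot :: "bool ^ 'n \<Rightarrow> bool ^ 'n" where
  "bnot a = (\<chi> i. \<not> a $ i)"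

definition bones :: "bool ^ 'n" where
  "bones = (\<chi> i. True)"

definition bzero :: "bool ^ 'n" where
  "bzero = (\<chi> i. False)"

definition bscale :: "bool ^ 'n \<Rightarrow> bool \<Rightarrow> bool ^ 'n" where
  "bscale g \<beta> = (if \<beta> then g else bzero)"

text \<open>Logical zonotope <c, G>, with generator matrix G given as the list of its columns
  [g_1,...,g_gamma]: all c XOR g_1 beta_1 XOR ... XOR g_gamma beta_gamma.\<close>
definition logical_zonotope :: "bool ^ 'n \<Rightarrow> (bool ^ 'n) list \<Rightarrow> (bool ^ 'n) set" where
  "logical_zonotope c G =
     {x. \<exists>\<beta> :: bool list. length \<beta> = length G \<and>
          x = foldl bxor c (map2 bscale G \<beta>)}"

definition or_generators :: "bool ^ 'n \<Rightarrow> (bool ^ 'n) list \<Rightarrow> bool ^ 'n \<Rightarrow> (bool ^ 'n) list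
    \<Rightarrow> (bool ^ 'n) list" where
  "or_generators c1 G1 c2 G2 =
     (let c1' = bxor c1 bones; c2' = bxor c2 bones in
      map (band c1') G2 @ map (band c2') G1 @ [band g1 g2. g1 \<leftarrow> G1, g2 \<leftarrow> G2])"

end

theory Submission
  imports Defs
begin

text \<open>Write \<open>\<not> z\<^sub>i = c\<^sub>i' \<oplus> X\<^sub>i\<close>, where \<open>X\<^sub>i\<close> is the XOR of the generators
  \<open>g\<^sub>i\<^sub>,\<^sub>k \<beta>\<^sub>i\<^sub>,\<^sub>k\<close>. Then
  \<open>\<not>(z\<^sub>1 \<or> z\<^sub>2) = (c\<^sub>1' \<oplus> X\<^sub>1)(c\<^sub>2' \<oplus> X\<^sub>2) = c\<^sub>1'c\<^sub>2' \<oplus> c\<^sub>1'X\<^sub>2 \<oplus> c\<^sub>2'X\<^sub>1 \<oplus> X\<^sub>1X\<^sub>2\<close>,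
  and since AND distributes over XOR, the last three terms are XOR-combinations of the three
  blocks of the new generator list, with coefficients \<open>\<beta>\<^sub>2\<^sub>,\<^sub>j\<close>, \<open>\<beta>\<^sub>1\<^sub>,\<^sub>i\<close> and
  \<open>\<beta>\<^sub>1\<^sub>,\<^sub>i \<and> \<beta>\<^sub>2\<^sub>,\<^sub>j\<close>. This is the NOR inclusion; the OR inclusion follows because
  XOR with \<open>\<one>\<close> translates a logical zonotope.\<close>

definition xor_sum :: "(bool ^ 'n) list \<Rightarrow> bool ^ 'n" where
  "xor_sum xs = foldl bxor bzero xs"

lemma bxor_assoc: "bxor (bxor a b) c = bxor a (bxor b c)"
  by (auto simp: bxor_def vec_eq_iff)

lemma bxor_commute: "bxor a b = bxor b a"
  by (auto simp: bxor_def vec_eq_iff)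

lemma bxor_bzero [simp]: "bxor a bzero = a" "bxor bzero a = a"
  by (auto simp: bxor_def bzero_def vec_eq_iff)

lemma band_bzero [simp]: "band a bzero = bzero"
  by (simp add: band_def bzero_def vec_eq_iff)

lemma band_bxor_distrib: "band a (bxor b c) = bxor (band a b) (band a c)"
  by (auto simp: band_def bxor_def vec_eq_iff)

lemma band_bxor_distrib_right: "band (bxor a b) c = bxor (band a c) (band b c)"
  by (auto simp: band_def bxor_def vec_eq_iff)

lemma band_bxor_bxor:
  "band (bxor a x) (bxor b y) = bxor (band a b) (bxor (band a y) (bxor (band b x) (band x y)))"
  by (simp add: vec_eq_iff band_def bxor_def) blast

lemma foldl_bxor_shift: "foldl bxor (bxor c d) xs = bxor c (foldl bxor d xs)"
  by (induction xs arbitrary: d) (simp_all add: bxor_assoc)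

lemma foldl_bxor_eq_xor_sum: "foldl bxor c xs = bxor c (xor_sum xs)"
  using foldl_bxor_shift[of c bzero xs] by (simp add: xor_sum_def)

lemma xor_sum_Nil [simp]: "xor_sum [] = bzero"
  by (simp add: xor_sum_def)

lemma xor_sum_Cons [simp]: "xor_sum (x # xs) = bxor x (xor_sum xs)"
  using foldl_bxor_eq_xor_sum[of "bxor bzero x" xs] by (simp add: xor_sum_def)

lemma xor_sum_append [simp]: "xor_sum (xs @ ys) = bxor (xor_sum xs) (xor_sum ys)"
  by (induction xs) (simp_all add: bxor_assoc)

lemma band_bscale: "band v (bscale g b) = bscale (band v g) b"
  by (auto simp: band_def bscale_def bzero_def vec_eq_iff)

lemma band_bscale_bscale: "band (bscale g a) (bscale h b) = bscale (band g h) (a \<and> b)"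
  by (auto simp: band_def bscale_def bzero_def vec_eq_iff)

lemma mem_logical_zonotope_iff:
  "x \<in> logical_zonotope c G \<longleftrightarrow>
     (\<exists>\<beta>. length \<beta> = length G \<and> x = bxor c (xor_sum (map2 bscale G \<beta>)))"
  by (simp add: logical_zonotope_def foldl_bxor_eq_xor_sum)

lemma bxor_mem_logical_zonotope:
  assumes "x \<in> logical_zonotope c G"
  shows "bxor x d \<in> logical_zonotope (bxor c d) G"
proof -
  obtain \<beta> where "length \<beta> = length G" "x = bxor c (xor_sum (map2 bscale G \<beta>))"
    using assms by (auto simp: mem_logical_zonotope_iff)
  then show ?thesis
    unfolding mem_logical_zonotope_iff by (metis bxor_assoc bxor_commute)
qed

lemma band_xor_combination:
  assumes "length \<beta> = length G"
  shows "band v (xor_sum (map2 bscale G \<beta>)) = xor_sum (map2 bscale (map (band v) G) \<beta>)"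
  using assms by (induction \<beta> G rule: list_induct2) (simp_all add: band_bxor_distrib band_bscale)

lemma band_xor_combinations:
  assumes "length \<beta>1 = length G1" and "length \<beta>2 = length G2"
  shows "band (xor_sum (map2 bscale G1 \<beta>1)) (xor_sum (map2 bscale G2 \<beta>2)) =
     xor_sum (map2 bscale [band g1 g2. g1 \<leftarrow> G1, g2 \<leftarrow> G2] [a \<and> b. a \<leftarrow> \<beta>1, b \<leftarrow> \<beta>2])"
  using assms(1)
proof (induction \<beta>1 G1 rule: list_induct2)
  case Nil
  then show ?case by (simp add: band_def bzero_def vec_eq_iff)
next
  case (Cons a \<beta>1 g G1)
  have row: "band (bscale g a) (xor_sum (map2 bscale G2 \<beta>2))
      = xor_sum (map2 bscale (map (band g) G2) (map ((\<and>) a) \<beta>2))"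
    using assms(2)
    by (induction \<beta>2 G2 rule: list_induct2) (simp_all add: band_bxor_distrib band_bscale_bscale)
  have "length (map (band g) G2) = length (map ((\<and>) a) \<beta>2)"
    using assms(2) by simp
  then show ?case
    by (simp add: band_bxor_distrib_right row Cons.IH zip_append del: map_map)
qed

lemma bnot_bor_mem_logical_zonotope:
  assumes z1: "z1 \<in> logical_zonotope c1 G1" and z2: "z2 \<in> logical_zonotope c2 G2"
  shows "bnot (bor z1 z2) \<in>
    logical_zonotope (band (bxor c1 bones) (bxor c2 bones)) (or_generators c1 G1 c2 G2)"
proof -
  obtain \<beta>1 where \<beta>1: "length \<beta>1 = length G1" "z1 = bxor c1 (xor_sum (map2 bscale G1 \<beta>1))"
    using z1 by (auto simp: mem_logical_zonotope_iff)
  obtain \<beta>2 where \<beta>2: "length \<beta>2 = length G2" "z2 = bxor c2 (xor_sum (map2 bscale G2 \<beta>2))"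
    using z2 by (auto simp: mem_logical_zonotope_iff)
  define c1' where "c1' = bxor c1 bones"
  define c2' where "c2' = bxor c2 bones"
  define X1 where "X1 = xor_sum (map2 bscale G1 \<beta>1)"
  define X2 where "X2 = xor_sum (map2 bscale G2 \<beta>2)"
  define \<beta> where "\<beta> = \<beta>2 @ \<beta>1 @ [a \<and> b. a \<leftarrow> \<beta>1, b \<leftarrow> \<beta>2]"
  have products_length:
    "length [a \<and> b. a \<leftarrow> \<beta>1, b \<leftarrow> \<beta>2] = length [band g1 g2. g1 \<leftarrow> G1, g2 \<leftarrow> G2]"
    using \<beta>1(1) \<beta>2(1) by (simp add: length_concat comp_def sum_list_triv)
  have generators_combination: "map2 bscale (or_generators c1 G1 c2 G2) \<beta> =
      map2 bscale (map (band c1') G2) \<beta>2 @ map2 bscale (map (band c2') G1) \<beta>1 @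
      map2 bscale [band g1 g2. g1 \<leftarrow> G1, g2 \<leftarrow> G2] [a \<and> b. a \<leftarrow> \<beta>1, b \<leftarrow> \<beta>2]"
    using \<beta>1(1) \<beta>2(1)
    by (simp add: or_generators_def c1'_def c2'_def \<beta>_def zip_append del: map_map)
  have c1'_X2: "band c1' X2 = xor_sum (map2 bscale (map (band c1') G2) \<beta>2)"
    unfolding X2_def using \<beta>2(1) by (rule band_xor_combination)
  have c2'_X1: "band c2' X1 = xor_sum (map2 bscale (map (band c2') G1) \<beta>1)"
    unfolding X1_def using \<beta>1(1) by (rule band_xor_combination)
  have X1_X2: "band X1 X2 =
      xor_sum (map2 bscale [band g1 g2. g1 \<leftarrow> G1, g2 \<leftarrow> G2] [a \<and> b. a \<leftarrow> \<beta>1, b \<leftarrow> \<beta>2])"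
    unfolding X1_def X2_def using \<beta>1(1) \<beta>2(1) by (rule band_xor_combinations)
  have "bnot (bor z1 z2) = band (bxor c1' X1) (bxor c2' X2)"
    by (simp add: \<beta>1(2) \<beta>2(2) c1'_def c2'_def X1_def X2_def
        vec_eq_iff bnot_def bor_def band_def bxor_def bones_def)
  also have "\<dots> = bxor (band c1' c2') (bxor (band c1' X2) (bxor (band c2' X1) (band X1 X2)))"
    by (rule band_bxor_bxor)
  also have "\<dots> = bxor (band c1' c2') (xor_sum (map2 bscale (or_generators c1 G1 c2 G2) \<beta>))"
    by (simp only: generators_combination xor_sum_append c1'_X2 c2'_X1 X1_X2)
  finally have "bnot (bor z1 z2) =
      bxor (band c1' c2') (xor_sum (map2 bscale (or_generators c1 G1 c2 G2) \<beta>))" .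
  moreover have "length \<beta> = length (or_generators c1 G1 c2 G2)"
    using \<beta>1(1) \<beta>2(1) products_length by (simp add: \<beta>_def or_generators_def)
  ultimately show ?thesis
    unfolding mem_logical_zonotope_iff c1'_def c2'_def by blast
qed

theorem mainTheorem5:
  fixes c1 c2 :: "bool ^ 'n" and G1 G2 :: "(bool ^ 'n) list"
  defines "c1' \<equiv> bxor c1 bones" and "c2' \<equiv> bxor c2 bones"
  shows "{bor z1 z2 | z1 z2. z1 \<in> logical_zonotope c1 G1 \<and> z2 \<in> logical_zonotope c2 G2}
           \<subseteq> logical_zonotope (bxor (band c1' c2') bones) (or_generators c1 G1 c2 G2)
         \<and> {bnot (bor z1 z2) | z1 z2. z1 \<in> logical_zonotope c1 G1 \<and> z2 \<in> logical_zonotope c2 G2}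
           \<subseteq> logical_zonotope (band c1' c2') (or_generators c1 G1 c2 G2)"
proof (intro conjI subsetI; elim CollectE exE conjE)
  fix x z1 z2
  assume "z1 \<in> logical_zonotope c1 G1" "z2 \<in> logical_zonotope c2 G2"
  then have nor: "bnot (bor z1 z2) \<in> logical_zonotope (band c1' c2') (or_generators c1 G1 c2 G2)"
    unfolding c1'_def c2'_def by (rule bnot_bor_mem_logical_zonotope)
  then show "x = bnot (bor z1 z2) \<Longrightarrow> x \<in> logical_zonotope (band c1' c2') (or_generators c1 G1 c2 G2)"
    by simp
  have "bxor (bnot (bor z1 z2)) bones = bor z1 z2"
    by (simp add: vec_eq_iff bor_def bnot_def bxor_def bones_def)
  with bxor_mem_logical_zonotope[OF nor, of bones] show "x = bor z1 z2 \<Longrightarrow>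
      x \<in> logical_zonotope (bxor (band c1' c2') bones) (or_generators c1 G1 c2 G2)"
    by simp
qed

end
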